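(* Let $G$ be a graph and $v$ a vertex of $G$. Then $v$ is always-activated if and only if $nd(v)=0$, and $v$ is never-activated if and only if $nd(v)=1$.
   Context: For a finite simple graph $G$ with vertex set $\{v_1,\dots,v_n\}$, the closed adjacency matrix $N(G)$ is the $n\times n$ matrix over $\mathbb{Z}_2$ whose $(i,j)$ entry is $1$ iff $i=j$ or $v_i$ is adjacent to $v_j$. The nullity is $\nu(G):=\dim\operatorname{Ker}(N(G))$, with the convention $\nu(K_0)=0$ for the graph with no vertices; elements of the kernel are null patterns. The null difference of $v$ is $nd(v):=\nu(G-v)-\nu(G)$, where $G-v$ is $G$ with $v$ and its incident edges deleted. A vertex $v$ is half-activated if $\boldsymbol{\ell}(v)=1$ for some null pattern $\boldsymbol{\ell}$; otherwise it is always-activated if $\mathbf{p}(v)=1$ for every $\mathbf{p}\in\mathbb{Z}_2^{V(G)}$ with $N(G)\mathbf{p}=\mathbf{1}$ (the all-ones vector), and never-activated if $\mathbf{p}(v)=0$ for every such $\mathbf{p}$. *)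

theory Defs
  imports Complex_Main "HOL-Library.Z2" "HOL-Library.Function_Algebras"
begin

definition simple_graph :: "'a set \<Rightarrow> ('a \<Rightarrow> 'a \<Rightarrow> bool) \<Rightarrow> bool" where
  "simple_graph V E \<longleftrightarrow> finite V \<and> (\<forall>x\<in>V. \<forall>y\<in>V. E x y \<longleftrightarrow> E y x) \<and> (\<forall>x\<in>V. \<not> E x x)"

definition closed_adj :: "('a \<Rightarrow> 'a \<Rightarrow> bool) \<Rightarrow> 'a \<Rightarrow> 'a \<Rightarrow> bit" where
  "closed_adj E i j = (if i = j \<or> E i j then 1 else 0)"

(* vectors in Z_2^V, represented as functions vanishing outside V *)
definition vecs :: "'a set \<Rightarrow> ('a \<Rightarrow> bit) set" where
  "vecs V = {p. \<forall>x. x \<notin> V \<longrightarrow> p x = 0}"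

definition Nmul :: "'a set \<Rightarrow> ('a \<Rightarrow> 'a \<Rightarrow> bool) \<Rightarrow> ('a \<Rightarrow> bit) \<Rightarrow> 'a \<Rightarrow> bit" where
  "Nmul V E p = (\<lambda>i. if i \<in> V then (\<Sum>j\<in>V. closed_adj E i j * p j) else 0)"

definition ones :: "'a set \<Rightarrow> 'a \<Rightarrow> bit" where
  "ones V = (\<lambda>x. if x \<in> V then 1 else 0)"

definition null_patterns :: "'a set \<Rightarrow> ('a \<Rightarrow> 'a \<Rightarrow> bool) \<Rightarrow> ('a \<Rightarrow> bit) set" where
  "null_patterns V E = {p \<in> vecs V. Nmul V E p = (\<lambda>_. 0)}"

definition nullity :: "'a set \<Rightarrow> ('a \<Rightarrow> 'a \<Rightarrow> bool) \<Rightarrow> nat" where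
  "nullity V E = vector_space.dim (\<lambda>(c::bit) (p::'a \<Rightarrow> bit) x. c * p x) (null_patterns V E)"

definition null_diff :: "'a set \<Rightarrow> ('a \<Rightarrow> 'a \<Rightarrow> bool) \<Rightarrow> 'a \<Rightarrow> int" where
  "null_diff V E v = int (nullity (V - {v}) E) - int (nullity V E)"

definition half_activated :: "'a set \<Rightarrow> ('a \<Rightarrow> 'a \<Rightarrow> bool) \<Rightarrow> 'a \<Rightarrow> bool" where
  "half_activated V E v \<longleftrightarrow> (\<exists>l\<in>null_patterns V E. l v = 1)"

definition always_activated :: "'a set \<Rightarrow> ('a \<Rightarrow> 'a \<Rightarrow> bool) \<Rightarrow> 'a \<Rightarrow> bool" where
  "always_activated V E v \<longleftrightarrow> \<not> half_activated V E v \<and>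
     (\<forall>p\<in>vecs V. Nmul V E p = ones V \<longrightarrow> p v = 1)"

definition never_activated :: "'a set \<Rightarrow> ('a \<Rightarrow> 'a \<Rightarrow> bool) \<Rightarrow> 'a \<Rightarrow> bool" where
  "never_activated V E v \<longleftrightarrow> \<not> half_activated V E v \<and>
     (\<forall>p\<in>vecs V. Nmul V E p = ones V \<longrightarrow> p v = 0)"

end

theory Submission
  imports Defs
begin

text \<open>Over \<open>\<int>\<^sub>2\<close> the closed adjacency matrix \<open>N\<close> is symmetric with unit diagonal,
  so \<open>x \<bullet> N x = \<Sum>\<^sub>i x\<^sub>i\<close>. Hence every null pattern is orthogonal to the all-ones vector,
  and \<open>N p = 1\<close> is always solvable.
  The null patterns of \<open>G - v\<close> are the \<open>x\<close> with \<open>x\<^sub>v = 0\<close> and \<open>(N x)\<^sub>i = 0\<close> for \<open>i \<noteq> v\<close>.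
  Both kernels contain \<open>{x \<in> Ker N. x\<^sub>v = 0}\<close> as a subspace of codimension at most one,
  which gives \<open>nd(v) = [N z = e\<^sub>v for some z with z\<^sub>v = 0] - [v half-activated]\<close>.
  If \<open>v\<close> is half-activated, \<open>e\<^sub>v\<close> is not in the range of \<open>N\<close>. Otherwise \<open>e\<^sub>v = N y\<close>,
  and every solution of \<open>N p = 1\<close> satisfies \<open>p\<^sub>v = y \<bullet> N p = y \<bullet> 1 = y \<bullet> N y = y\<^sub>v\<close>.
  So \<open>y\<^sub>v\<close> decides both the activation of \<open>v\<close> and \<open>nd(v)\<close>.\<close>

declare add_bit_eq_xor [simp del] mult_bit_eq_and [simp del]

lemma bit_add_self [simp]: "(x::bit) + x = 0"
  by (cases x) simp_all

lemma bit_mult_self [simp]: "(x::bit) * x = x"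
  by (cases x) simp_all

lemma bit_eq_add_iff: "(x::bit) = y + z \<longleftrightarrow> x + y = z"
  by (cases y) auto

lemma vector_space_pointwise: "vector_space (\<lambda>(c::'b::field) (p::'a \<Rightarrow> 'b) x. c * p x)"
  by unfold_locales (auto simp: fun_eq_iff algebra_simps)

lemma vector_space_field_self: "vector_space ((*) :: 'b::field \<Rightarrow> 'b \<Rightarrow> 'b)"
  by unfold_locales (simp_all add: algebra_simps)

interpretation pointwise: vector_space "\<lambda>(c::'b::field) (p::'a \<Rightarrow> 'b) x. c * p x"
  by (rule vector_space_pointwise)

context vector_space
begin

lemma dim_insert_not_in_span:
  assumes "finite S" "x \<notin> span S"
  shows "dim (insert x S) = Suc (dim S)"
proof -
  obtain B where B: "B \<subseteq> span S" "independent B" "span S \<subseteq> span B" "card B = dim S"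
    using basis_exists [of "span S"] by (metis dim_span)
  have "finite B"
    using independent_span_bound[OF assms(1) B(2)] B(1) by simp
  have "x \<notin> B"
    using B(1) assms(2) by blast
  have "dim (span (insert x S)) = Suc (dim S)"
  proof (rule dim_unique)
    show "insert x B \<subseteq> span (insert x S)"
      using B(1) span_mono[of S "insert x S"] span_base[of x "insert x S"] by blast
    have "insert x S \<subseteq> span (insert x B)"
      using B(3) span_superset[of S] span_mono[of B "insert x B"] span_base[of x "insert x B"]
      by blast
    then show "span (insert x S) \<subseteq> span (insert x B)"
      by (rule span_minimal[OF _ subspace_span])
    have "x \<notin> span B"
      using span_minimal[OF B(1) subspace_span] assms(2) by blast
    then show "independent (insert x B)"
      using B(2) by (rule independent_insertI)
    show "card (insert x B) = Suc (dim S)"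
      using B(4) \<open>finite B\<close> \<open>x \<notin> B\<close> by simp
  qed
  then show ?thesis by simp
qed

lemma dim_eq_dim_kernel_functional:
  assumes W: "subspace W" "finite W" and f: "Vector_Spaces.linear scale (*) f"
  shows "dim W = dim {x\<in>W. f x = 0} + of_bool (\<exists>w\<in>W. f w \<noteq> 0)"
proof (cases "\<exists>w\<in>W. f w \<noteq> 0")
  case True
  then obtain w where w: "w \<in> W" "f w \<noteq> 0" by blast
  define H where "H = {x\<in>W. f x = 0}"
  have hom: "module_hom scale (*) f"
    using f by (simp add: module_hom_iff_linear)
  have "subspace H"
    unfolding H_def subspace_def
    using W(1) module_hom.add[OF hom] module_hom.scale[OF hom] module_hom.zero[OF hom]
    by (simp add: subspace_0 subspace_add subspace_scale)
  have "W \<subseteq> span (insert w H)"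
  proof
    fix x assume "x \<in> W"
    define c where "c = f x / f w"
    have "f (x - c *s w) = 0"
      using w(2) by (simp add: module_hom.diff[OF hom] module_hom.scale[OF hom] c_def)
    then have "x - c *s w \<in> H"
      using \<open>x \<in> W\<close> w(1) W(1) by (simp add: H_def subspace_diff subspace_scale)
    then have "(x - c *s w) + c *s w \<in> span (insert w H)"
      by (intro span_add span_scale) (auto intro: span_base)
    then show "x \<in> span (insert w H)" by simp
  qed
  moreover have "span (insert w H) \<subseteq> W"
    using w(1) W(1) by (intro span_minimal) (auto simp: H_def)
  ultimately have "dim W = dim (insert w H)"
    by (metis dim_span subset_antisym)
  moreover have "w \<notin> span H"
    using w(2) \<open>subspace H\<close> by (simp add: span_eq_iff[of H, THEN iffD2]) (simp add: H_def)
  moreover have "finite H"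
    using W(2) by (simp add: H_def)
  ultimately show ?thesis
    using True by (simp add: dim_insert_not_in_span H_def)
next
  case False
  then have "{x\<in>W. f x = 0} = W" by auto
  with False show ?thesis by simp
qed

end

lemma linear_pointwise_eval:
  "Vector_Spaces.linear (\<lambda>(c::'b::field) (p::'a \<Rightarrow> 'b) x. c * p x) (*) (\<lambda>p. p v)"
  by (simp add: Vector_Spaces.linear_iff vector_space_pointwise vector_space_field_self)

definition dotp :: "'a set \<Rightarrow> ('a \<Rightarrow> bit) \<Rightarrow> ('a \<Rightarrow> bit) \<Rightarrow> bit" where
  "dotp T x y = (\<Sum>i\<in>T. x i * y i)"

lemma dotp_commute: "dotp T x y = dotp T y x"
  by (simp add: dotp_def mult.commute)

lemma dotp_add_left: "dotp T (x + y) z = dotp T x z + dotp T y z"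
  by (simp add: dotp_def distrib_right sum.distrib)

lemma dotp_add_right: "dotp T x (y + z) = dotp T x y + dotp T x z"
  by (simp add: dotp_def distrib_left sum.distrib)

lemma dotp_ones_right: "dotp T x (ones T) = (\<Sum>i\<in>T. x i)"
  by (simp add: dotp_def ones_def)

definition unit_vec :: "'a \<Rightarrow> 'a \<Rightarrow> bit" where
  "unit_vec v = (\<lambda>i. if i = v then 1 else 0)"

lemma dotp_unit_vec_right: "finite T \<Longrightarrow> v \<in> T \<Longrightarrow> dotp T x (unit_vec v) = x v"
  by (simp add: dotp_def unit_vec_def if_distrib cong: if_cong)

lemma dotp_unit_vec_left: "finite T \<Longrightarrow> v \<in> T \<Longrightarrow> dotp T (unit_vec v) x = x v"
  by (simp add: dotp_commute dotp_unit_vec_right)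

lemma unit_vec_in_vecs: "v \<in> T \<Longrightarrow> unit_vec v \<in> vecs T"
  by (simp add: unit_vec_def vecs_def)

lemma sum_sum_symmetric_bit:
  fixes f :: "'a \<Rightarrow> 'a \<Rightarrow> bit"
  assumes "finite S" "\<And>i j. i \<in> S \<Longrightarrow> j \<in> S \<Longrightarrow> f i j = f j i"
  shows "(\<Sum>i\<in>S. \<Sum>j\<in>S. f i j) = (\<Sum>i\<in>S. f i i)"
  using assms
proof (induction S rule: finite_induct)
  case (insert k S)
  have "(\<Sum>i\<in>S. f i k) = (\<Sum>j\<in>S. f k j)"
    using insert.prems by (intro sum.cong) auto
  then have "(\<Sum>i\<in>insert k S. \<Sum>j\<in>insert k S. f i j) = f k k + (\<Sum>i\<in>S. \<Sum>j\<in>S. f i j)"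
    using insert.hyps by (simp add: sum.distrib add_ac)
  with insert show ?case by simp
qed simp

lemma in_row_span_if_annihilates_kernel:
  fixes r :: "'j \<Rightarrow> 'a \<Rightarrow> bit"
  assumes "finite J" "finite T"
    and "\<And>x. x \<in> vecs T \<Longrightarrow> (\<forall>j\<in>J. dotp T (r j) x = 0) \<Longrightarrow> dotp T c x = 0"
  shows "\<exists>y. \<forall>i\<in>T. c i = (\<Sum>j\<in>J. y j * r j i)"
  using assms(1,3)
proof (induction J arbitrary: c rule: finite_induct)
  case empty
  have "c i = 0" if "i \<in> T" for i
    using empty.prems[OF unit_vec_in_vecs[OF that]] by (simp add: dotp_unit_vec_right assms(2) that)
  then show ?case by simp
next
  case (insert a J)
  have extend: "(\<Sum>j\<in>insert a J. (y(a := t)) j * r j i) = t * r a i + (\<Sum>j\<in>J. y j * r j i)"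
    for y t i
    using insert.hyps by simp (auto intro!: sum.cong)
  show ?case
  proof (cases "\<forall>x\<in>vecs T. (\<forall>j\<in>J. dotp T (r j) x = 0) \<longrightarrow> dotp T c x = 0")
    case True
    then obtain y where "\<forall>i\<in>T. c i = (\<Sum>j\<in>J. y j * r j i)"
      using insert.IH by blast
    then have "\<forall>i\<in>T. c i = (\<Sum>j\<in>insert a J. (y(a := 0)) j * r j i)"
      by (simp only: extend) simp
    then show ?thesis by blast
  next
    case False
    then obtain x0 where x0: "x0 \<in> vecs T" "\<forall>j\<in>J. dotp T (r j) x0 = 0" "dotp T c x0 = 1"
      by auto
    have a_x0: "dotp T (r a) x0 = 1"
      using insert.prems[OF x0(1)] x0(2,3) by (cases "dotp T (r a) x0") auto
    \<comment> \<open>Adding the row \<open>r a\<close> to \<open>c\<close> removes the obstruction \<open>x0\<close>.\<close>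
    have "dotp T (c + r a) z = 0"
      if z: "z \<in> vecs T" "\<forall>j\<in>J. dotp T (r j) z = 0" for z
    proof (cases "dotp T (r a) z")
      case zero
      then show ?thesis using insert.prems[OF z(1)] z(2) by (simp add: dotp_add_left)
    next
      case one
      have "z + x0 \<in> vecs T"
        using z(1) x0(1) by (simp add: vecs_def)
      moreover have "\<forall>j\<in>insert a J. dotp T (r j) (z + x0) = 0"
        using z(2) x0(2) one a_x0 by (simp add: dotp_add_right)
      ultimately have "dotp T c (z + x0) = 0"
        using insert.prems by blast
      then show ?thesis using one x0(3) by (simp add: dotp_add_left dotp_add_right)
    qed
    then obtain y where "\<forall>i\<in>T. (c + r a) i = (\<Sum>j\<in>J. y j * r j i)"
      using insert.IH[of "c + r a"] by blast
    then have "\<forall>i\<in>T. c i = (\<Sum>j\<in>insert a J. (y(a := 1)) j * r j i)"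
      by (simp only: extend) (simp add: bit_eq_add_iff)
    then show ?thesis by blast
  qed
qed

lemma simple_graph_finite: "simple_graph V E \<Longrightarrow> finite V"
  by (simp add: simple_graph_def)

lemma closed_adj_commute:
  "simple_graph V E \<Longrightarrow> i \<in> V \<Longrightarrow> j \<in> V \<Longrightarrow> closed_adj E i j = closed_adj E j i"
  by (auto simp: simple_graph_def closed_adj_def)

lemma finite_vecs: "finite T \<Longrightarrow> finite (vecs T)"
proof -
  assume "finite T"
  then have "finite {p. \<forall>x. (x \<in> T \<longrightarrow> p x \<in> {0, 1}) \<and> (x \<notin> T \<longrightarrow> p x = (0::bit))}"
    by (intro finite_set_of_finite_funs) auto
  moreover have "(b::bit) \<in> {0, 1}" for b
    by (cases b) simp_all
  ultimately show ?thesis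
    by (simp add: vecs_def)
qed

lemma finite_null_patterns: "finite V \<Longrightarrow> finite (null_patterns V E)"
  by (simp add: null_patterns_def finite_vecs)

lemma Nmul_add: "Nmul V E (x + y) = Nmul V E x + Nmul V E y"
  by (rule ext) (simp add: Nmul_def distrib_left sum.distrib)

lemma Nmul_scale: "Nmul V E (\<lambda>i. c * x i) = (\<lambda>i. c * Nmul V E x i)"
  by (rule ext) (simp add: Nmul_def sum_distrib_left ac_simps)

lemma Nmul_eq_iff: "y \<in> vecs V \<Longrightarrow> Nmul V E x = y \<longleftrightarrow> (\<forall>i\<in>V. Nmul V E x i = y i)"
  by (auto simp: fun_eq_iff vecs_def Nmul_def)

lemma Nmul_eq_0_iff: "Nmul V E x = (\<lambda>_. 0) \<longleftrightarrow> (\<forall>i\<in>V. Nmul V E x i = 0)"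
  by (simp add: Nmul_eq_iff vecs_def)

lemma subspace_null_patterns:
  "pointwise.subspace (null_patterns V E :: ('a \<Rightarrow> bit) set)"
proof -
  have "Nmul V E 0 = (\<lambda>_. 0)"
    by (simp add: Nmul_def fun_eq_iff)
  then show ?thesis
    unfolding pointwise.subspace_def null_patterns_def
    by (auto simp: vecs_def Nmul_add Nmul_scale fun_eq_iff)
qed

lemma linear_Nmul_eval:
  "Vector_Spaces.linear (\<lambda>(c::bit) (p::'a \<Rightarrow> bit) x. c * p x) (*) (\<lambda>p. Nmul V E p v)"
  by (simp add: Vector_Spaces.linear_iff vector_space_pointwise vector_space_field_self Nmul_add Nmul_scale)

lemma dotp_Nmul_commute:
  assumes "simple_graph V E"
  shows "dotp V x (Nmul V E p) = dotp V (Nmul V E x) p"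
proof -
  have "dotp V x (Nmul V E p) = (\<Sum>i\<in>V. \<Sum>j\<in>V. x i * closed_adj E i j * p j)"
    unfolding dotp_def Nmul_def by (auto simp: sum_distrib_left mult.assoc intro!: sum.cong)
  also have "\<dots> = (\<Sum>i\<in>V. \<Sum>j\<in>V. closed_adj E i j * x j * p i)"
    using closed_adj_commute[OF assms] by (subst sum.swap) (auto simp: ac_simps intro!: sum.cong)
  also have "\<dots> = dotp V (Nmul V E x) p"
    unfolding dotp_def Nmul_def by (auto simp: sum_distrib_left sum_distrib_right ac_simps intro!: sum.cong)
  finally show ?thesis .
qed

lemma dotp_Nmul_self:
  assumes "simple_graph V E"
  shows "dotp V x (Nmul V E x) = (\<Sum>i\<in>V. x i)"
proof -
  have "dotp V x (Nmul V E x) = (\<Sum>i\<in>V. \<Sum>j\<in>V. x i * closed_adj E i j * x j)"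
    unfolding dotp_def Nmul_def by (auto simp: sum_distrib_left mult.assoc intro!: sum.cong)
  also have "\<dots> = (\<Sum>i\<in>V. x i * closed_adj E i i * x i)"
    using simple_graph_finite[OF assms] closed_adj_commute[OF assms]
    by (intro sum_sum_symmetric_bit) (auto simp: ac_simps)
  also have "\<dots> = (\<Sum>i\<in>V. x i)"
    by (simp add: closed_adj_def)
  finally show ?thesis .
qed

lemma Nmul_solvable_if_annihilates_null_patterns:
  assumes G: "simple_graph V E" and c: "c \<in> vecs V"
    and perp: "\<And>x. x \<in> null_patterns V E \<Longrightarrow> dotp V c x = 0"
  shows "\<exists>y\<in>vecs V. Nmul V E y = c"
proof -
  have fin: "finite V"
    using G by (rule simple_graph_finite)
  have row: "dotp V (\<lambda>i. closed_adj E j i) x = Nmul V E x j" if "j \<in> V" for j x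
    using that by (simp add: dotp_def Nmul_def)
  have "dotp V c x = 0" if "x \<in> vecs V" "\<forall>j\<in>V. dotp V (\<lambda>i. closed_adj E j i) x = 0" for x
  proof -
    have "Nmul V E x = (\<lambda>_. 0)"
      using that(2) by (simp add: Nmul_eq_iff vecs_def row)
    then show ?thesis
      using perp that(1) by (simp add: null_patterns_def)
  qed
  then obtain y where y: "\<forall>i\<in>V. c i = (\<Sum>j\<in>V. y j * closed_adj E j i)"
    using in_row_span_if_annihilates_kernel[OF fin fin] by blast
  define y' where "y' = (\<lambda>j. if j \<in> V then y j else 0)"
  have "y' \<in> vecs V"
    by (simp add: y'_def vecs_def)
  moreover have "Nmul V E y' i = c i" if "i \<in> V" for i
    using that y closed_adj_commute[OF G]
    by (auto simp: Nmul_def y'_def mult.commute intro!: sum.cong)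
  then have "Nmul V E y' = c"
    using c by (simp add: Nmul_eq_iff)
  ultimately show ?thesis by blast
qed

lemma all_ones_solvable:
  assumes "simple_graph V E"
  shows "\<exists>p\<in>vecs V. Nmul V E p = ones V"
proof (rule Nmul_solvable_if_annihilates_null_patterns[OF assms])
  show "ones V \<in> vecs V"
    by (simp add: ones_def vecs_def)
  fix x assume "x \<in> null_patterns V E"
  then have "dotp V x (Nmul V E x) = 0"
    by (simp add: null_patterns_def dotp_def)
  then show "dotp V (ones V) x = 0"
    using dotp_Nmul_self[OF assms] by (simp add: dotp_commute dotp_ones_right)
qed

lemma null_patterns_delete:
  assumes "finite V" "v \<in> V"
  shows "null_patterns (V - {v}) E = {x \<in> vecs V. x v = 0 \<and> (\<forall>i\<in>V - {v}. Nmul V E x i = 0)}"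
proof -
  have restrict: "Nmul (V - {v}) E x i = Nmul V E x i" if "x v = 0" "i \<in> V - {v}" for x i
    using that assms by (simp add: Nmul_def sum_diff1)
  have vecs_delete: "x \<in> vecs (V - {v}) \<longleftrightarrow> x \<in> vecs V \<and> x v = 0" for x
    using assms(2) by (auto simp: vecs_def)
  show ?thesis
  proof (intro set_eqI)
    fix x
    show "x \<in> null_patterns (V - {v}) E \<longleftrightarrow>
        x \<in> {x \<in> vecs V. x v = 0 \<and> (\<forall>i\<in>V - {v}. Nmul V E x i = 0)}"
      using restrict[of x] zero_neq_one by (auto simp: null_patterns_def Nmul_eq_0_iff vecs_delete; metis)
  qed
qed

lemma nullity_eq:
  assumes "finite V"
  shows "nullity V E = pointwise.dim {x \<in> null_patterns V E. x v = 0} + of_bool (half_activated V E v)"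
  using pointwise.dim_eq_dim_kernel_functional[OF subspace_null_patterns
      finite_null_patterns[OF assms] linear_pointwise_eval]
  by (simp add: nullity_def half_activated_def)

lemma nullity_delete_eq:
  assumes "finite V" "v \<in> V"
  shows "nullity (V - {v}) E = pointwise.dim {x \<in> null_patterns V E. x v = 0}
    + of_bool (\<exists>z\<in>vecs V. Nmul V E z = unit_vec v \<and> z v = 0)"
proof -
  have "{x \<in> null_patterns (V - {v}) E. Nmul V E x v = 0} = {x \<in> null_patterns V E. x v = 0}"
  proof -
    have "(\<forall>i\<in>V - {v}. Nmul V E x i = 0) \<and> Nmul V E x v = 0 \<longleftrightarrow> (\<forall>i\<in>V. Nmul V E x i = 0)" for x
      using assms(2) by blast
    then show ?thesis
      unfolding null_patterns_delete[OF assms] by (auto simp: null_patterns_def Nmul_eq_0_iff)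
  qed
  moreover have "(\<exists>z\<in>null_patterns (V - {v}) E. Nmul V E z v \<noteq> 0)
      \<longleftrightarrow> (\<exists>z\<in>vecs V. Nmul V E z = unit_vec v \<and> z v = 0)"
    unfolding null_patterns_delete[OF assms]
    using assms(2) by (auto simp: Nmul_eq_iff unit_vec_in_vecs) (auto simp: unit_vec_def split: if_splits)
  moreover have "finite (null_patterns (V - {v}) E)"
    using assms(1) by (simp add: finite_null_patterns)
  ultimately show ?thesis
    using pointwise.dim_eq_dim_kernel_functional[OF subspace_null_patterns _ linear_Nmul_eval[of V E v]]
    by (simp add: nullity_def)
qed

lemma null_diff_eq:
  "finite V \<Longrightarrow> v \<in> V \<Longrightarrow> null_diff V E v =
    of_bool (\<exists>z\<in>vecs V. Nmul V E z = unit_vec v \<and> z v = 0) - of_bool (half_activated V E v)"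
  by (simp add: null_diff_def nullity_eq[of V E v] nullity_delete_eq)

lemma Nmul_neq_unit_vec_if_half_activated:
  assumes G: "simple_graph V E" and "v \<in> V" "half_activated V E v"
  shows "Nmul V E z \<noteq> unit_vec v"
proof
  assume z: "Nmul V E z = unit_vec v"
  obtain l where l: "l \<in> null_patterns V E" "l v = 1"
    using assms(3) by (auto simp: half_activated_def)
  have fin: "finite V"
    using G by (rule simple_graph_finite)
  have "l v = dotp V l (Nmul V E z)"
    using z fin \<open>v \<in> V\<close> by (simp add: dotp_unit_vec_right)
  also have "\<dots> = dotp V (Nmul V E l) z"
    by (rule dotp_Nmul_commute[OF G])
  also have "\<dots> = 0"
    using l(1) by (simp add: null_patterns_def dotp_def)
  finally show False
    using l(2) by simp
qed

lemma unit_vec_in_range_if_not_half_activated: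
  assumes G: "simple_graph V E" and "v \<in> V" "\<not> half_activated V E v"
  shows "\<exists>y\<in>vecs V. Nmul V E y = unit_vec v"
proof (rule Nmul_solvable_if_annihilates_null_patterns[OF G unit_vec_in_vecs[OF \<open>v \<in> V\<close>]])
  fix x assume "x \<in> null_patterns V E"
  then show "dotp V (unit_vec v) x = 0"
    using assms simple_graph_finite[OF G] by (auto simp: half_activated_def dotp_unit_vec_left)
qed

lemma solution_value_eq:
  assumes G: "simple_graph V E" and "v \<in> V"
    and y: "Nmul V E y = unit_vec v" and p: "Nmul V E p = ones V"
  shows "p v = y v"
proof -
  have fin: "finite V"
    using G by (rule simple_graph_finite)
  have "p v = dotp V (Nmul V E y) p"
    using y fin \<open>v \<in> V\<close> by (simp add: dotp_unit_vec_left)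
  also have "\<dots> = dotp V y (Nmul V E p)"
    by (rule dotp_Nmul_commute[OF G, symmetric])
  also have "\<dots> = dotp V y (Nmul V E y)"
    using p dotp_Nmul_self[OF G] by (simp add: dotp_ones_right)
  also have "\<dots> = y v"
    using y fin \<open>v \<in> V\<close> by (simp add: dotp_unit_vec_right)
  finally show ?thesis .
qed

theorem proposition2p6:
  fixes V :: "'a set" and E :: "'a \<Rightarrow> 'a \<Rightarrow> bool" and v :: 'a
  assumes "simple_graph V E" and "v \<in> V"
  shows "(always_activated V E v \<longleftrightarrow> null_diff V E v = 0) \<and>
         (never_activated V E v \<longleftrightarrow> null_diff V E v = 1)"
proof -
  have fin: "finite V"
    using assms(1) by (rule simple_graph_finite)
  obtain p0 where p0: "p0 \<in> vecs V" "Nmul V E p0 = ones V"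
    using all_ones_solvable[OF assms(1)] by blast
  show ?thesis
  proof (cases "half_activated V E v")
    case True
    then have "null_diff V E v = -1"
      using null_diff_eq[OF fin assms(2)] Nmul_neq_unit_vec_if_half_activated[OF assms True] by simp
    with True show ?thesis
      by (simp add: always_activated_def never_activated_def)
  next
    case False
    then obtain y where y: "y \<in> vecs V" "Nmul V E y = unit_vec v"
      using unit_vec_in_range_if_not_half_activated[OF assms] by blast
    have solutions: "p v = y v" if "Nmul V E p = ones V" for p
      using solution_value_eq[OF assms y(2) that] .
    have "z v = y v" if "Nmul V E z = unit_vec v" for z
      using solution_value_eq[OF assms that p0(2)] solutions[OF p0(2)] by (rule trans[OF sym])
    then have "(\<exists>z\<in>vecs V. Nmul V E z = unit_vec v \<and> z v = 0) \<longleftrightarrow> y v = 0"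
      using y by (metis (no_types, lifting))
    then have "null_diff V E v = of_bool (y v = 0)"
      using null_diff_eq[OF fin assms(2)] False by simp
    moreover have "(\<forall>p\<in>vecs V. Nmul V E p = ones V \<longrightarrow> p v = b) \<longleftrightarrow> y v = b" for b
      using p0 solutions by metis
    ultimately show ?thesis
      using False by (cases "y v") (simp_all add: always_activated_def never_activated_def)
  qed
qed

end
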